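(* Let $R>0$, $D>0$ and $k\ge0$ an integer. There exists an algorithm $\mathcal A\in\mathfrak A_{\mathrm{lin}}$ such that for every $m\ge1$, every $\mathbf B\in\mathbb R^{m\times m}$ with $\|\mathbf B\|\le R$, and every $\mathbf v=\mathbf B\mathbf z^\star$ with $\|\mathbf z^\star\|\le D$, the iterate $\mathbf z^k$ produced by $\mathcal A$ satisfies $$\|\mathbf B\mathbf z^k-\mathbf v\|^2\le\frac{R^2D^2}{(2\lfloor k/2\rfloor+1)^2}.$$
   Context: $\mathfrak A_{\mathrm{lin}}$ is the class of iterative algorithms for a linear equation $\mathbf B\mathbf z=\mathbf v$ that access $\mathbf B$ only through products with $\mathbf B$ and $\mathbf B^\intercal$, in the sense that $\mathbf z^k\in\mathrm{span}\{\mathbf v^0,\dots,\mathbf v^k\}$, where $\mathbf v^0=0$, $\mathbf v^1=\mathbf v$, and for each $j\ge2$, $\mathbf v^j=\mathbf B\mathbf v^i$ or $\mathbf v^j=\mathbf B^\intercal\mathbf v^i$ for some $i\in\{0,\dots,j-1\}$. $\|\mathbf B\|$ is the spectral norm. *)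

theory Defs
  imports Complex_Main "Jordan_Normal_Form.Matrix"
begin

definition vnorm :: "real vec \<Rightarrow> real" where
  "vnorm v = sqrt (v \<bullet> v)"

definition spec_norm :: "real mat \<Rightarrow> real" where
  "spec_norm B = Sup {vnorm (B *\<^sub>v x) | x. x \<in> carrier_vec (dim_col B) \<and> vnorm x \<le> 1}"

text \<open>An algorithm maps the input (B, v) to its sequence of iterates z^0, z^1, ...\<close>
definition in_A_lin :: "(real mat \<Rightarrow> real vec \<Rightarrow> nat \<Rightarrow> real vec) \<Rightarrow> bool" where
  "in_A_lin A \<longleftrightarrow>
    (\<forall>m B v. B \<in> carrier_mat m m \<longrightarrow> v \<in> carrier_vec m \<longrightarrow>
      (\<exists>vs :: nat \<Rightarrow> real vec.
          vs 0 = 0\<^sub>v m \<and> vs 1 = v \<and>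
          (\<forall>j\<ge>2. \<exists>i<j. vs j = B *\<^sub>v vs i \<or> vs j = B\<^sup>T *\<^sub>v vs i) \<and>
          (\<forall>k. \<exists>c :: nat \<Rightarrow> real.
                 A B v k = vec m (\<lambda>r. \<Sum>i\<le>k. c i * vs i $ r))))"

end

theory Submission
  imports Defs
begin

(*
  Let M_k = B/R for odd k and M_k = B^T/R for even k, and run the three-term recurrence
  w_0 = 0, w_1 = z*, w_(k+2) = 2 M_(k+1) w_(k+1) - w_k.  Since M_(k+1) is the adjoint of M_k and
  every M_k is a contraction, |w_(k+1)|^2 - 2 <M_(k+1) w_(k+1), w_k> + |w_k|^2 = |z*|^2 is conserved,
  whence |w_(k+2) - w_k| <= 2 |z*|.  For v = B z* the even iterates are computable from v alone:
  w_(2t) = (2/R) c_t v + B g_t with c_t = (-1)^(t+1) t and g_t a combination of B^T v, B^T B B^T v, ...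
  So x = -(g_(t+1) - g_t) / d_t with d_t = (2/R) (c_(t+1) - c_t) = (2/R) (-1)^t (2t+1) only needs
  products with B and B^T, and B x - v = -(w_(2t+2) - w_(2t)) / d_t has norm at most R |z*| / (2t+1).
*)

lemma scalar_prod_self_nonneg: "0 \<le> (x :: real vec) \<bullet> x"
  unfolding scalar_prod_def by (auto intro: sum_nonneg)

lemma scalar_prod_diff_self:
  fixes x y :: "real vec"
  assumes "x \<in> carrier_vec n" "y \<in> carrier_vec n"
  shows "(x - y) \<bullet> (x - y) = x \<bullet> x - 2 * (x \<bullet> y) + y \<bullet> y"
  using assms by (simp add: minus_scalar_prod_distrib[of _ n] scalar_prod_minus_distrib[of _ n]
      comm_scalar_prod[of y n x])

lemma scalar_prod_Cauchy_Schwarz: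
  fixes x y :: "real vec"
  assumes x: "x \<in> carrier_vec n" and y: "y \<in> carrier_vec n"
  shows "(x \<bullet> y)\<^sup>2 \<le> (x \<bullet> x) * (y \<bullet> y)"
proof (cases "y \<bullet> y = 0")
  case True
  then have "y $ i = 0" if "i < n" for i
    using y that unfolding scalar_prod_def by (auto simp: sum_nonneg_eq_0_iff)
  then have "x \<bullet> y = 0" using x y unfolding scalar_prod_def by simp
  then show ?thesis using scalar_prod_self_nonneg[of x] scalar_prod_self_nonneg[of y] by simp
next
  case False
  then have yy: "y \<bullet> y > 0" using scalar_prod_self_nonneg[of y] by simp
  define t where "t = (x \<bullet> y) / (y \<bullet> y)"
  have "0 \<le> (t \<cdot>\<^sub>v y - x) \<bullet> (t \<cdot>\<^sub>v y - x)" by (rule scalar_prod_self_nonneg)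
  also have "\<dots> = x \<bullet> x - (x \<bullet> y)\<^sup>2 / (y \<bullet> y)"
    using x y yy by (simp add: scalar_prod_diff_self[of _ n] comm_scalar_prod[of y n x] t_def
        power2_eq_square field_simps)
  finally show ?thesis using yy by (simp add: field_simps)
qed

lemma vnorm_nonneg: "0 \<le> vnorm x"
  unfolding vnorm_def by (simp add: scalar_prod_self_nonneg)

lemma vnorm_power2: "(vnorm x)\<^sup>2 = x \<bullet> x"
  unfolding vnorm_def by (simp add: scalar_prod_self_nonneg)

lemma vnorm_smult: "vnorm (a \<cdot>\<^sub>v x) = \<bar>a\<bar> * vnorm x"
proof -
  have "(a \<cdot>\<^sub>v x) \<bullet> (a \<cdot>\<^sub>v x) = a\<^sup>2 * (x \<bullet> x)" by (simp add: power2_eq_square)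
  then show ?thesis unfolding vnorm_def by (simp add: real_sqrt_mult)
qed

lemma scalar_prod_le_vnorm_mult:
  fixes x y :: "real vec"
  assumes "x \<in> carrier_vec n" "y \<in> carrier_vec n"
  shows "x \<bullet> y \<le> vnorm x * vnorm y"
proof -
  have "\<bar>x \<bullet> y\<bar> = sqrt ((x \<bullet> y)\<^sup>2)" by simp
  also have "\<dots> \<le> sqrt ((x \<bullet> x) * (y \<bullet> y))"
    using scalar_prod_Cauchy_Schwarz[OF assms] by (rule real_sqrt_le_mono)
  finally show ?thesis unfolding vnorm_def by (simp add: real_sqrt_mult)
qed

lemma scalar_prod_mult_mat_vec_le:
  fixes B :: "real mat"
  assumes B: "B \<in> carrier_mat n m" and x: "x \<in> carrier_vec m"
  shows "(B *\<^sub>v x) \<bullet> (B *\<^sub>v x) \<le> (\<Sum>r<n. row B r \<bullet> row B r) * (x \<bullet> x)"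
proof -
  have "(B *\<^sub>v x) \<bullet> (B *\<^sub>v x) = (\<Sum>r<n. (row B r \<bullet> x)\<^sup>2)"
    using B unfolding scalar_prod_def[of "B *\<^sub>v x"]
    by (simp add: power2_eq_square atLeast0LessThan)
  also have "\<dots> \<le> (\<Sum>r<n. (row B r \<bullet> row B r) * (x \<bullet> x))"
    using B x by (intro sum_mono scalar_prod_Cauchy_Schwarz[of _ m]) auto
  finally show ?thesis by (simp add: sum_distrib_right)
qed

lemma spec_norm_upper:
  fixes B :: "real mat"
  assumes B: "B \<in> carrier_mat n m" and y: "y \<in> carrier_vec m" "vnorm y \<le> 1"
  shows "vnorm (B *\<^sub>v y) \<le> spec_norm B"
proof -
  define F where "F = (\<Sum>r<n. row B r \<bullet> row B r)"
  have F: "0 \<le> F" unfolding F_def by (simp add: sum_nonneg scalar_prod_self_nonneg)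
  have bound: "vnorm (B *\<^sub>v x) \<le> sqrt F" if "x \<in> carrier_vec m" "vnorm x \<le> 1" for x
  proof -
    have "x \<bullet> x \<le> 1" using that vnorm_power2[of x] vnorm_nonneg[of x]
      by (metis power_le_one)
    then have "(B *\<^sub>v x) \<bullet> (B *\<^sub>v x) \<le> F"
      using scalar_prod_mult_mat_vec_le[OF B that(1)] F unfolding F_def[symmetric]
      by (meson mult_left_le order_trans scalar_prod_self_nonneg)
    then show ?thesis unfolding vnorm_def by (rule real_sqrt_le_mono)
  qed
  then have "bdd_above {vnorm (B *\<^sub>v x) | x. x \<in> carrier_vec (dim_col B) \<and> vnorm x \<le> 1}"
    using B by (intro bdd_aboveI[where M = "sqrt F"]) (auto simp: bound)
  then show ?thesis unfolding spec_norm_def using B y by (auto intro!: cSup_upper)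
qed

lemma vnorm_mult_mat_vec_le:
  fixes B :: "real mat"
  assumes B: "B \<in> carrier_mat n m" and x: "x \<in> carrier_vec m"
  shows "vnorm (B *\<^sub>v x) \<le> spec_norm B * vnorm x"
proof (cases "vnorm x = 0")
  case True
  then have "(B *\<^sub>v x) \<bullet> (B *\<^sub>v x) \<le> 0"
    using scalar_prod_mult_mat_vec_le[OF B x] vnorm_power2[of x] by simp
  then have "vnorm (B *\<^sub>v x) = 0" unfolding vnorm_def by (simp add: antisym scalar_prod_self_nonneg)
  then show ?thesis using True by simp
next
  case False
  then have pos: "vnorm x > 0" using vnorm_nonneg[of x] by simp
  have "vnorm (B *\<^sub>v ((1 / vnorm x) \<cdot>\<^sub>v x)) \<le> spec_norm B"
    using x pos by (intro spec_norm_upper[OF B]) (auto simp: vnorm_smult)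
  then show ?thesis
    using pos by (simp add: mult_mat_vec[OF B x] vnorm_smult pos_divide_le_eq mult.commute)
qed

lemma vnorm_transpose_mult_le:
  fixes B :: "real mat"
  assumes B: "B \<in> carrier_mat n m" and R: "0 \<le> R"
    and bound: "\<And>x. x \<in> carrier_vec m \<Longrightarrow> vnorm (B *\<^sub>v x) \<le> R * vnorm x"
    and y: "y \<in> carrier_vec n"
  shows "vnorm (B\<^sup>T *\<^sub>v y) \<le> R * vnorm y"
proof -
  define u where "u = B\<^sup>T *\<^sub>v y"
  have u: "u \<in> carrier_vec m" unfolding u_def using B y by simp
  have "(vnorm u)\<^sup>2 = y \<bullet> (B *\<^sub>v u)"
    unfolding vnorm_power2 u_def by (rule transpose_vec_mult_scalar[OF B _ y]) (use u u_def in simp)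
  also have "\<dots> \<le> vnorm y * vnorm (B *\<^sub>v u)"
    using B y u by (intro scalar_prod_le_vnorm_mult[of _ n]) auto
  also have "\<dots> \<le> vnorm y * (R * vnorm u)"
    by (rule mult_left_mono[OF bound[OF u] vnorm_nonneg])
  finally have "vnorm u * vnorm u \<le> (R * vnorm y) * vnorm u"
    by (simp add: power2_eq_square algebra_simps)
  then show ?thesis unfolding u_def[symmetric]
    using R vnorm_nonneg[of u] vnorm_nonneg[of y]
    by (cases "vnorm u = 0") (auto simp: mult_le_cancel_right)
qed

fun cheb_seq :: "(nat \<Rightarrow> real vec \<Rightarrow> real vec) \<Rightarrow> real vec \<Rightarrow> nat \<Rightarrow> real vec" where
  "cheb_seq M z 0 = 0\<^sub>v (dim_vec z)"
| "cheb_seq M z (Suc 0) = z"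
| "cheb_seq M z (Suc (Suc k)) = 2 \<cdot>\<^sub>v M (Suc k) (cheb_seq M z (Suc k)) - cheb_seq M z k"

lemma cheb_seq_carrier:
  assumes "\<And>k x. x \<in> carrier_vec n \<Longrightarrow> M k x \<in> carrier_vec n" and "z \<in> carrier_vec n"
  shows "cheb_seq M z k \<in> carrier_vec n"
  by (induction k rule: induct_nat_012) (use assms in auto)

locale adjoint_contraction_chain =
  fixes n :: nat and M :: "nat \<Rightarrow> real vec \<Rightarrow> real vec"
  assumes carrier: "x \<in> carrier_vec n \<Longrightarrow> M k x \<in> carrier_vec n"
    and adjoint: "x \<in> carrier_vec n \<Longrightarrow> y \<in> carrier_vec n \<Longrightarrow> M (Suc k) x \<bullet> y = x \<bullet> M k y"
    and contraction: "x \<in> carrier_vec n \<Longrightarrow> vnorm (M k x) \<le> vnorm x"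
begin

lemma scalar_prod_contraction:
  assumes "x \<in> carrier_vec n"
  shows "M k x \<bullet> M k x \<le> x \<bullet> x"
  using power_mono[OF contraction[OF assms, of k] vnorm_nonneg, where n = 2]
  by (simp add: vnorm_power2)

lemma cheb_seq_energy:
  assumes z: "z \<in> carrier_vec n"
  shows "cheb_seq M z (Suc k) \<bullet> cheb_seq M z (Suc k)
      - 2 * (M (Suc k) (cheb_seq M z (Suc k)) \<bullet> cheb_seq M z k)
      + cheb_seq M z k \<bullet> cheb_seq M z k = z \<bullet> z"
proof (induction k)
  case 0
  show ?case using z carrier[OF z] by simp
next
  case (Suc k)
  define a b where "a = cheb_seq M z (Suc k)" and "b = cheb_seq M z k"
  define c a' where "c = M (Suc k) a" and "a' = cheb_seq M z (Suc (Suc k))"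
  have a'_eq: "a' = 2 \<cdot>\<^sub>v c - b" unfolding a_def b_def c_def a'_def by simp
  have a: "a \<in> carrier_vec n" and b: "b \<in> carrier_vec n" and c: "c \<in> carrier_vec n"
    unfolding a_def b_def c_def using z by (auto intro: cheb_seq_carrier[OF carrier] carrier)
  have a': "a' \<in> carrier_vec n" unfolding a'_eq using b c by simp
  have "a' \<bullet> a' = a' \<bullet> (2 \<cdot>\<^sub>v c - b)" by (simp only: a'_eq[symmetric])
  also have "\<dots> = 2 * (a' \<bullet> c) - a' \<bullet> b"
    using a' b c by (simp add: scalar_prod_minus_distrib[of _ n])
  finally have "a' \<bullet> a' = 2 * (a' \<bullet> c) - a' \<bullet> b" .
  moreover have "M (Suc (Suc k)) a' \<bullet> a = a' \<bullet> c" unfolding c_def by (rule adjoint[OF a' a])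
  moreover have "a' \<bullet> b = 2 * (c \<bullet> b) - b \<bullet> b"
    unfolding a'_eq using b c by (simp add: minus_scalar_prod_distrib[of _ n])
  moreover have "a \<bullet> a - 2 * (c \<bullet> b) + b \<bullet> b = z \<bullet> z"
    using Suc.IH unfolding a_def b_def c_def .
  ultimately show ?case unfolding a_def[symmetric] a'_def[symmetric] by simp
qed

lemma cheb_seq_step_bound:
  assumes z: "z \<in> carrier_vec n"
  shows "vnorm (cheb_seq M z (Suc (Suc k)) - cheb_seq M z k) \<le> 2 * vnorm z"
proof -
  define a b where "a = cheb_seq M z (Suc k)" and "b = cheb_seq M z k"
  define c where "c = M (Suc k) a"
  have a: "a \<in> carrier_vec n" and b: "b \<in> carrier_vec n" and c: "c \<in> carrier_vec n"
    unfolding a_def b_def c_def using z by (auto intro: cheb_seq_carrier[OF carrier] carrier)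
  have "cheb_seq M z (Suc (Suc k)) - cheb_seq M z k = 2 \<cdot>\<^sub>v (c - b)"
    using b c unfolding a_def b_def c_def by (intro eq_vecI) auto
  moreover have "(c - b) \<bullet> (c - b) \<le> z \<bullet> z"
  proof -
    have "(c - b) \<bullet> (c - b) = z \<bullet> z - a \<bullet> a + c \<bullet> c"
      using scalar_prod_diff_self[OF c b] cheb_seq_energy[OF z, of k]
      unfolding a_def[symmetric] b_def[symmetric] c_def[symmetric] by simp
    then show ?thesis using scalar_prod_contraction[OF a] unfolding c_def by simp
  qed
  then have "vnorm (c - b) \<le> vnorm z" unfolding vnorm_def by (rule real_sqrt_le_mono)
  ultimately show ?thesis by (simp add: vnorm_smult)
qed

end

definition alt_op :: "real mat \<Rightarrow> real \<Rightarrow> nat \<Rightarrow> real vec \<Rightarrow> real vec" where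
  "alt_op B R k x = (1 / R) \<cdot>\<^sub>v ((if odd k then B else B\<^sup>T) *\<^sub>v x)"

lemma alt_op_carrier:
  assumes "B \<in> carrier_mat n n" "x \<in> carrier_vec n"
  shows "alt_op B R k x \<in> carrier_vec n"
  using assms unfolding alt_op_def by simp

lemma adjoint_contraction_chain_alt_op:
  fixes B :: "real mat"
  assumes B: "B \<in> carrier_mat n n" and R: "0 < R"
    and bound: "\<And>x. x \<in> carrier_vec n \<Longrightarrow> vnorm (B *\<^sub>v x) \<le> R * vnorm x"
  shows "adjoint_contraction_chain n (alt_op B R)"
proof
  fix x y :: "real vec" and k :: nat
  assume x: "x \<in> carrier_vec n" and y: "y \<in> carrier_vec n"
  show "alt_op B R (Suc k) x \<bullet> y = x \<bullet> alt_op B R k y"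
  proof (cases "odd k")
    case True
    then show ?thesis unfolding alt_op_def using B x y by (simp add: transpose_vec_mult_scalar[OF B])
  next
    case False
    have "(B *\<^sub>v x) \<bullet> y = (B\<^sup>T *\<^sub>v y) \<bullet> x"
      using B x y by (simp add: transpose_vec_mult_scalar[OF B x y] comm_scalar_prod[of _ n])
    also have "\<dots> = x \<bullet> (B\<^sup>T *\<^sub>v y)" using B x y by (simp add: comm_scalar_prod[of _ n])
    finally show ?thesis unfolding alt_op_def using False B x y by simp
  qed
next
  fix x :: "real vec" and k :: nat
  assume x: "x \<in> carrier_vec n"
  show "alt_op B R k x \<in> carrier_vec n" using B x by (rule alt_op_carrier)
  have "vnorm ((if odd k then B else B\<^sup>T) *\<^sub>v x) \<le> R * vnorm x"
    using bound[OF x] vnorm_transpose_mult_le[OF B _ bound x] R by simp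
  then show "vnorm (alt_op B R k x) \<le> vnorm x"
    unfolding alt_op_def vnorm_smult using R by (simp add: field_simps)
qed

lemma cheb_seq_alt_op_two:
  fixes B :: "real mat" and R :: real
  assumes "B \<in> carrier_mat n n" "z \<in> carrier_vec n"
  shows "cheb_seq (alt_op B R) z 2 = (2 / R) \<cdot>\<^sub>v (B *\<^sub>v z)"
  using assms by (simp add: numeral_2_eq_2 alt_op_def smult_smult_assoc)

lemma cheb_seq_alt_op_even_step:
  fixes B :: "real mat" and R :: real
  assumes B: "B \<in> carrier_mat n n" and z: "z \<in> carrier_vec n"
  defines "w \<equiv> cheb_seq (alt_op B R) z"
  shows "w (2 * Suc (Suc t)) =
    (4 / R\<^sup>2) \<cdot>\<^sub>v (B *\<^sub>v (B\<^sup>T *\<^sub>v w (2 * Suc t))) - 2 \<cdot>\<^sub>v w (2 * Suc t) - w (2 * t)"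
proof -
  define k where "k = 2 * t"
  have k: "even k" and idx: "2 * Suc (Suc t) = Suc (Suc (Suc (Suc k)))" "2 * Suc t = Suc (Suc k)"
    unfolding k_def by simp_all
  have w: "w j \<in> carrier_vec n" for j
    unfolding w_def using alt_op_carrier[OF B] z by (rule cheb_seq_carrier)
  then have dim: "dim_vec (w j) = n" for j by (simp add: carrier_vecD)
  have step: "w (Suc (Suc j)) = (2 / R) \<cdot>\<^sub>v ((if even j then B else B\<^sup>T) *\<^sub>v w (Suc j)) - w j" for j
    unfolding w_def by (subst cheb_seq.simps(3)) (simp add: alt_op_def smult_smult_assoc del: cheb_seq.simps)
  have w4: "w (Suc (Suc (Suc (Suc k)))) = (2 / R) \<cdot>\<^sub>v (B *\<^sub>v w (Suc (Suc (Suc k)))) - w (Suc (Suc k))"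
    and w3: "w (Suc (Suc (Suc k))) = (2 / R) \<cdot>\<^sub>v (B\<^sup>T *\<^sub>v w (Suc (Suc k))) - w (Suc k)"
    using step[of "Suc (Suc k)"] step[of "Suc k"] k by simp_all
  have w2: "w (Suc (Suc k)) $ i = 2 / R * (B *\<^sub>v w (Suc k)) $ i - w k $ i" if "i < n" for i
    using arg_cong[OF step[of k], of "\<lambda>x. x $ i"] k B w[of k] that
    by (simp add: carrier_vecD del: index_mult_mat_vec)
  have Bw3: "B *\<^sub>v w (Suc (Suc (Suc k))) = (2 / R) \<cdot>\<^sub>v (B *\<^sub>v (B\<^sup>T *\<^sub>v w (Suc (Suc k)))) - B *\<^sub>v w (Suc k)"
    unfolding w3 using B w by (simp add: mult_minus_distrib_mat_vec[OF B] mult_mat_vec[OF B])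
  show ?thesis
    unfolding idx k_def[symmetric] w4 Bw3 using B w2
    by (intro eq_vecI) (simp_all add: dim power2_eq_square algebra_simps del: index_mult_mat_vec)
qed

definition cheb_even_coeff :: "nat \<Rightarrow> real" where
  "cheb_even_coeff t = (-1) ^ Suc t * real t"

lemma cheb_even_coeff_rec:
  "cheb_even_coeff (Suc (Suc t)) = - 2 * cheb_even_coeff (Suc t) - cheb_even_coeff t"
  unfolding cheb_even_coeff_def by (simp add: algebra_simps)

lemma cheb_even_coeff_diff: "cheb_even_coeff (Suc t) - cheb_even_coeff t = (-1) ^ t * (2 * real t + 1)"
  unfolding cheb_even_coeff_def by (simp add: algebra_simps)

fun cheb_even_part :: "real mat \<Rightarrow> real \<Rightarrow> real vec \<Rightarrow> nat \<Rightarrow> real vec" where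
  "cheb_even_part B R v 0 = 0\<^sub>v (dim_vec v)"
| "cheb_even_part B R v (Suc 0) = 0\<^sub>v (dim_vec v)"
| "cheb_even_part B R v (Suc (Suc t)) =
    (4 / R\<^sup>2) \<cdot>\<^sub>v (B\<^sup>T *\<^sub>v ((2 / R * cheb_even_coeff (Suc t)) \<cdot>\<^sub>v v + B *\<^sub>v cheb_even_part B R v (Suc t)))
    - 2 \<cdot>\<^sub>v cheb_even_part B R v (Suc t) - cheb_even_part B R v t"

lemma cheb_even_part_carrier:
  assumes "B \<in> carrier_mat n n" "v \<in> carrier_vec n"
  shows "cheb_even_part B R v t \<in> carrier_vec n"
  by (induction t rule: induct_nat_012) (use assms in auto)

lemma mult_mat_vec_cheb_even_part:
  fixes B :: "real mat" and R :: real
  assumes B: "B \<in> carrier_mat n n" and v: "v \<in> carrier_vec n"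
  defines "g \<equiv> cheb_even_part B R v"
  shows "B *\<^sub>v g (Suc (Suc t)) =
    (4 / R\<^sup>2) \<cdot>\<^sub>v (B *\<^sub>v (B\<^sup>T *\<^sub>v ((2 / R * cheb_even_coeff (Suc t)) \<cdot>\<^sub>v v + B *\<^sub>v g (Suc t))))
    - 2 \<cdot>\<^sub>v (B *\<^sub>v g (Suc t)) - B *\<^sub>v g t"
  unfolding g_def using B v cheb_even_part_carrier[OF B v]
  by (simp add: mult_minus_distrib_mat_vec[OF B] mult_mat_vec[OF B])

lemma cheb_seq_alt_op_even:
  fixes B :: "real mat" and R :: real
  assumes B: "B \<in> carrier_mat n n" and z: "z \<in> carrier_vec n"
  shows "cheb_seq (alt_op B R) z (2 * t)
    = (2 / R * cheb_even_coeff t) \<cdot>\<^sub>v (B *\<^sub>v z) + B *\<^sub>v cheb_even_part B R (B *\<^sub>v z) t"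
proof (induction t rule: induct_nat_012)
  case 0
  show ?case using B z by (intro eq_vecI) (auto simp: cheb_even_coeff_def)
next
  case 1
  have "B *\<^sub>v cheb_even_part B R (B *\<^sub>v z) (Suc 0) = 0\<^sub>v n"
    using B by (auto intro!: eq_vecI)
  then show ?case using cheb_seq_alt_op_two[OF B z, of R] B z
    by (intro eq_vecI) (simp_all add: cheb_even_coeff_def)
next
  case (ge2 t)
  define v w g where "v = B *\<^sub>v z" and "w = cheb_seq (alt_op B R) z" and "g = cheb_even_part B R v"
  define c where "c t = 2 / R * cheb_even_coeff t" for t
  define X where "X = B *\<^sub>v (B\<^sup>T *\<^sub>v w (2 * Suc t))"
  have v: "v \<in> carrier_vec n" unfolding v_def using B z by simp
  have w: "w j \<in> carrier_vec n" for j
    unfolding w_def using alt_op_carrier[OF B] z by (rule cheb_seq_carrier)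
  then have w_dim: "dim_vec (w j) = n" for j by (simp add: carrier_vecD)
  have X: "X \<in> carrier_vec n" unfolding X_def using B w by simp
  have IH: "w (2 * t) = c t \<cdot>\<^sub>v v + B *\<^sub>v g t" "w (2 * Suc t) = c (Suc t) \<cdot>\<^sub>v v + B *\<^sub>v g (Suc t)"
    using ge2.IH unfolding v_def w_def g_def c_def .
  have c_rec: "c (Suc (Suc t)) = - 2 * c (Suc t) - c t"
    unfolding c_def cheb_even_coeff_rec by (simp add: algebra_simps)
  have g_rec: "B *\<^sub>v g (Suc (Suc t)) = (4 / R\<^sup>2) \<cdot>\<^sub>v X - 2 \<cdot>\<^sub>v (B *\<^sub>v g (Suc t)) - B *\<^sub>v g t"
    using mult_mat_vec_cheb_even_part[OF B v, of R t] unfolding X_def IH(2) c_def g_def .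
  have "w (2 * Suc (Suc t)) = c (Suc (Suc t)) \<cdot>\<^sub>v v + B *\<^sub>v g (Suc (Suc t))"
  proof (rule eq_vecI)
    fix i assume "i < dim_vec (c (Suc (Suc t)) \<cdot>\<^sub>v v + B *\<^sub>v g (Suc (Suc t)))"
    then have i: "i < n" using B by simp
    have "w (2 * Suc (Suc t)) $ i = 4 / R\<^sup>2 * X $ i - 2 * w (2 * Suc t) $ i - w (2 * t) $ i"
      unfolding cheb_seq_alt_op_even_step[OF B z, where R = R and t = t, folded w_def, folded X_def] using i X
      by (simp add: w_dim carrier_vecD)
    also have "\<dots> = c (Suc (Suc t)) * v $ i + (B *\<^sub>v g (Suc (Suc t))) $ i"
      unfolding g_rec c_rec IH using i
      by (simp add: carrier_vecD[OF v] carrier_vecD[OF X] carrier_matD[OF B] algebra_simps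
          del: index_mult_mat_vec)
    finally show "w (2 * Suc (Suc t)) $ i = (c (Suc (Suc t)) \<cdot>\<^sub>v v + B *\<^sub>v g (Suc (Suc t))) $ i"
      using i by (simp add: carrier_vecD[OF v] carrier_matD[OF B] del: index_mult_mat_vec)
  qed (simp add: w_dim carrier_vecD[OF v] carrier_matD[OF B])
  then show ?case unfolding v_def w_def g_def c_def .
qed

fun krylov :: "real mat \<Rightarrow> real vec \<Rightarrow> nat \<Rightarrow> real vec" where
  "krylov B v 0 = 0\<^sub>v (dim_vec v)"
| "krylov B v (Suc 0) = v"
| "krylov B v (Suc (Suc j)) = (if even j then B\<^sup>T else B) *\<^sub>v krylov B v (Suc j)"

lemma krylov_carrier:
  assumes "B \<in> carrier_mat n n" "v \<in> carrier_vec n"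
  shows "krylov B v i \<in> carrier_vec n"
  by (induction i rule: induct_nat_012) (use assms in auto)

lemma krylov_odd_step: "odd i \<Longrightarrow> B\<^sup>T *\<^sub>v krylov B v i = krylov B v (Suc i)"
  by (cases i) auto

lemma krylov_even_step: "even i \<Longrightarrow> 0 < i \<Longrightarrow> B *\<^sub>v krylov B v i = krylov B v (Suc i)"
  by (cases i) auto

definition lincomb_span :: "nat \<Rightarrow> (nat \<Rightarrow> real vec) \<Rightarrow> nat set \<Rightarrow> real vec set" where
  "lincomb_span n us S = range (\<lambda>c. vec n (\<lambda>r. \<Sum>i\<in>S. c i * us i $ r))"

lemma lincomb_spanI: "x = vec n (\<lambda>r. \<Sum>i\<in>S. c i * us i $ r) \<Longrightarrow> x \<in> lincomb_span n us S"
  unfolding lincomb_span_def by (rule range_eqI)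

lemma lincomb_spanE:
  assumes "x \<in> lincomb_span n us S"
  obtains c where "x = vec n (\<lambda>r. \<Sum>i\<in>S. c i * us i $ r)"
  using assms unfolding lincomb_span_def by blast

lemma zero_in_lincomb_span: "0\<^sub>v n \<in> lincomb_span n us S"
  by (rule lincomb_spanI[where c = "\<lambda>_. 0"]) (auto intro!: eq_vecI)

lemma in_lincomb_span:
  assumes "finite S" "i \<in> S" "us i \<in> carrier_vec n"
  shows "us i \<in> lincomb_span n us S"
  by (rule lincomb_spanI[where c = "\<lambda>j. if j = i then 1 else 0"])
    (use assms in \<open>auto intro!: eq_vecI simp: if_distrib[of "\<lambda>x. x * _"] cong: if_cong\<close>)

lemma lincomb_span_mono:
  assumes "x \<in> lincomb_span n us S" "S \<subseteq> T" "finite T"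
  shows "x \<in> lincomb_span n us T"
proof -
  obtain c where x: "x = vec n (\<lambda>r. \<Sum>i\<in>S. c i * us i $ r)"
    using assms(1) by (rule lincomb_spanE)
  have "(\<Sum>i\<in>S. c i * us i $ r) = (\<Sum>i\<in>T. (if i \<in> S then c i else 0) * us i $ r)" for r
    using assms(2,3) by (intro sum.mono_neutral_cong_left) auto
  then show ?thesis unfolding x by (intro lincomb_spanI) simp
qed

lemma lincomb_span_add:
  assumes "x \<in> lincomb_span n us S" "y \<in> lincomb_span n us S"
  shows "x + y \<in> lincomb_span n us S"
proof -
  obtain c d where "x = vec n (\<lambda>r. \<Sum>i\<in>S. c i * us i $ r)" "y = vec n (\<lambda>r. \<Sum>i\<in>S. d i * us i $ r)"
    using assms(1) assms(2) by (elim lincomb_spanE)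
  then show ?thesis
    by (intro lincomb_spanI[where c = "\<lambda>i. c i + d i"]) (auto intro!: eq_vecI simp: distrib_right sum.distrib)
qed

lemma lincomb_span_smult:
  assumes "x \<in> lincomb_span n us S"
  shows "a \<cdot>\<^sub>v x \<in> lincomb_span n us S"
proof -
  obtain c where "x = vec n (\<lambda>r. \<Sum>i\<in>S. c i * us i $ r)"
    using assms by (rule lincomb_spanE)
  then show ?thesis
    by (intro lincomb_spanI[where c = "\<lambda>i. a * c i"]) (auto intro!: eq_vecI simp: sum_distrib_left mult.assoc)
qed

lemma lincomb_span_diff:
  assumes "x \<in> lincomb_span n us S" "y \<in> lincomb_span n us S"
  shows "x - y \<in> lincomb_span n us S"
proof -
  have "x - y = x + (-1) \<cdot>\<^sub>v y"
    using assms by (auto elim!: lincomb_spanE intro!: eq_vecI)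
  then show ?thesis using assms by (simp add: lincomb_span_add lincomb_span_smult)
qed

lemma mult_mat_vec_lincomb_span:
  fixes M :: "real mat"
  assumes M: "M \<in> carrier_mat n n" and S: "finite S" "inj_on f S"
    and us: "\<And>i. us i \<in> carrier_vec n" and step: "\<And>i. i \<in> S \<Longrightarrow> M *\<^sub>v us i = us (f i)"
    and x: "x \<in> lincomb_span n us S"
  shows "M *\<^sub>v x \<in> lincomb_span n us (f ` S)"
proof -
  obtain c where x: "x = vec n (\<lambda>r. \<Sum>i\<in>S. c i * us i $ r)"
    using assms by (blast elim: lincomb_spanE)
  have mv: "(M *\<^sub>v y) $ r = (\<Sum>j\<in>{0..<n}. M $$ (r, j) * y $ j)" if "y \<in> carrier_vec n" "r < n" for y r
    using that M by (simp add: scalar_prod_def carrier_vecD carrier_matD)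
  have "(M *\<^sub>v x) $ r = (\<Sum>i\<in>S. c i * us (f i) $ r)" if r: "r < n" for r
  proof -
    have "(M *\<^sub>v x) $ r = (\<Sum>j\<in>{0..<n}. M $$ (r, j) * (\<Sum>i\<in>S. c i * us i $ j))"
      using r unfolding x by (subst mv) auto
    also have "\<dots> = (\<Sum>i\<in>S. c i * (\<Sum>j\<in>{0..<n}. M $$ (r, j) * us i $ j))"
      by (simp add: sum_distrib_left sum.swap[of _ S] algebra_simps)
    also have "\<dots> = (\<Sum>i\<in>S. c i * us (f i) $ r)"
      using r us by (simp add: mv[symmetric] step)
    finally show ?thesis .
  qed
  also have "(\<Sum>i\<in>S. c i * us (f i) $ r) = (\<Sum>j\<in>f ` S. c (the_inv_into S f j) * us j $ r)" for r
    using S by (simp add: sum.reindex the_inv_into_f_f)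
  finally show ?thesis
    using M by (intro lincomb_spanI[where c = "\<lambda>j. c (the_inv_into S f j)"] eq_vecI) auto
qed

lemma cheb_even_part_in_krylov_span:
  assumes B: "B \<in> carrier_mat n n" and v: "v \<in> carrier_vec n"
  shows "cheb_even_part B R v t \<in> lincomb_span n (krylov B v) {i \<in> {1..<2 * t}. even i}"
proof (induction t rule: induct_nat_012)
  case (ge2 t)
  define Ev Od where "Ev t = {i \<in> {1..<2 * t}. even i}" and "Od t = {i \<in> {..<2 * t}. odd i}"
    for t :: nat
  let ?span = "lincomb_span n (krylov B v)" and ?g = "cheb_even_part B R v"
  have fin: "finite (Ev t)" "finite (Od t)" for t unfolding Ev_def Od_def by simp_all
  have K: "krylov B v i \<in> carrier_vec n" for i using B v by (rule krylov_carrier)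
  have shift: "Suc ` Ev (Suc t) \<subseteq> Od (Suc t)" "Suc ` Od (Suc t) \<subseteq> Ev (Suc (Suc t))"
    unfolding Ev_def Od_def image_subset_iff by (simp_all, presburger+)
  have mono: "Ev t \<subseteq> Ev (Suc (Suc t))" "Ev (Suc t) \<subseteq> Ev (Suc (Suc t))"
    unfolding Ev_def by auto
  have "B *\<^sub>v ?g (Suc t) \<in> ?span (Suc ` Ev (Suc t))"
    using ge2.IH(2) unfolding Ev_def
    by (intro mult_mat_vec_lincomb_span[OF B _ _ K]) (auto intro: krylov_even_step)
  moreover have "krylov B v (Suc 0) \<in> ?span (Od (Suc t))"
    by (rule in_lincomb_span[OF fin(2)]) (simp_all add: Od_def v)
  ultimately have "(2 / R * cheb_even_coeff (Suc t)) \<cdot>\<^sub>v v + B *\<^sub>v ?g (Suc t) \<in> ?span (Od (Suc t))"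
    using lincomb_span_mono[OF _ shift(1) fin(2)] by (intro lincomb_span_add lincomb_span_smult) simp_all
  then have "B\<^sup>T *\<^sub>v ((2 / R * cheb_even_coeff (Suc t)) \<cdot>\<^sub>v v + B *\<^sub>v ?g (Suc t)) \<in> ?span (Suc ` Od (Suc t))"
    using B fin(2) by (intro mult_mat_vec_lincomb_span[OF _ _ _ K]) (auto simp: Od_def krylov_odd_step)
  then have "B\<^sup>T *\<^sub>v ((2 / R * cheb_even_coeff (Suc t)) \<cdot>\<^sub>v v + B *\<^sub>v ?g (Suc t)) \<in> ?span (Ev (Suc (Suc t)))"
    using shift(2) fin(1) by (rule lincomb_span_mono)
  moreover have "?g (Suc t) \<in> ?span (Ev (Suc (Suc t)))" "?g t \<in> ?span (Ev (Suc (Suc t)))"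
    using ge2.IH[folded Ev_def] mono by (auto intro: lincomb_span_mono[OF _ _ fin(1)])
  ultimately show ?case
    unfolding cheb_even_part.simps(3) Ev_def[symmetric]
    by (intro lincomb_span_diff lincomb_span_smult)
qed (use v in \<open>simp_all add: carrier_vecD zero_in_lincomb_span\<close>)

definition cheb_solver :: "real \<Rightarrow> real mat \<Rightarrow> real vec \<Rightarrow> nat \<Rightarrow> real vec" where
  "cheb_solver R B v k =
    ((-1) ^ Suc (k div 2) * R / (2 * (2 * real (k div 2) + 1))) \<cdot>\<^sub>v
      (cheb_even_part B R v (Suc (k div 2)) - cheb_even_part B R v (k div 2))"

lemma cheb_solver_in_krylov_span:
  assumes "B \<in> carrier_mat n n" "v \<in> carrier_vec n"
  shows "cheb_solver R B v k \<in> lincomb_span n (krylov B v) {..k}"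
proof -
  have "cheb_even_part B R v j \<in> lincomb_span n (krylov B v) {..k}" if "j \<le> Suc (k div 2)" for j
  proof (rule lincomb_span_mono[OF cheb_even_part_in_krylov_span[OF assms]])
    have "i \<le> k" if "i < 2 * j" "even i" for i using that \<open>j \<le> Suc (k div 2)\<close> by presburger
    then show "{i \<in> {1..<2 * j}. even i} \<subseteq> {..k}" by auto
  qed simp
  then show ?thesis unfolding cheb_solver_def by (intro lincomb_span_smult lincomb_span_diff) simp_all
qed

lemma in_A_lin_cheb_solver: "in_A_lin (cheb_solver R)"
  unfolding in_A_lin_def
proof (intro allI impI)
  fix n B v assume B: "(B :: real mat) \<in> carrier_mat n n" and v: "(v :: real vec) \<in> carrier_vec n"
  show "\<exists>vs. vs 0 = 0\<^sub>v n \<and> vs 1 = v \<and> (\<forall>j\<ge>2. \<exists>i<j. vs j = B *\<^sub>v vs i \<or> vs j = B\<^sup>T *\<^sub>v vs i) \<and>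
        (\<forall>k. \<exists>c. cheb_solver R B v k = vec n (\<lambda>r. \<Sum>i\<le>k. c i * vs i $ r))"
  proof (intro exI[of _ "krylov B v"] conjI allI impI)
    fix j :: nat assume "2 \<le> j"
    then obtain i where j: "j = Suc (Suc i)" by (metis add_2_eq_Suc le_Suc_ex)
    show "\<exists>i<j. krylov B v j = B *\<^sub>v krylov B v i \<or> krylov B v j = B\<^sup>T *\<^sub>v krylov B v i"
      by (rule exI[of _ "Suc i"]) (simp add: j)
  next
    fix k
    obtain c where "cheb_solver R B v k = vec n (\<lambda>r. \<Sum>i\<le>k. c i * krylov B v i $ r)"
      using cheb_solver_in_krylov_span[OF B v] by (rule lincomb_spanE)
    then show "\<exists>c. cheb_solver R B v k = vec n (\<lambda>r. \<Sum>i\<le>k. c i * krylov B v i $ r)" by blast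
  qed (use v in \<open>simp_all add: carrier_vecD\<close>)
qed

lemma cheb_solver_residual:
  fixes B :: "real mat" and R :: real and k :: nat
  assumes B: "B \<in> carrier_mat n n" and z: "z \<in> carrier_vec n" and R: "R \<noteq> 0"
  defines "t \<equiv> k div 2" and "w \<equiv> cheb_seq (alt_op B R) z"
  shows "B *\<^sub>v cheb_solver R B (B *\<^sub>v z) k - B *\<^sub>v z
    = ((-1) ^ Suc t * R / (2 * (2 * real t + 1))) \<cdot>\<^sub>v (w (2 * Suc t) - w (2 * t))"
proof -
  define s v g where "s = (-1) ^ Suc t * R / (2 * (2 * real t + 1))" and "v = B *\<^sub>v z"
    and "g = cheb_even_part B R v"
  define a where "a j = 2 / R * cheb_even_coeff j" for j
  have v: "v \<in> carrier_vec n" unfolding v_def using B z by simp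
  have Bg: "B *\<^sub>v g j \<in> carrier_vec n" for j unfolding g_def using B cheb_even_part_carrier[OF B v] by simp
  have w: "w (2 * j) = a j \<cdot>\<^sub>v v + B *\<^sub>v g j" for j
    unfolding w_def a_def v_def g_def by (rule cheb_seq_alt_op_even[OF B z])
  define q where "q = 2 * real t + 1"
  have q: "q \<noteq> 0" unfolding q_def by simp
  have a_diff: "a (Suc t) - a t = 2 / R * ((-1) ^ t * q)"
    unfolding a_def q_def by (simp only: right_diff_distrib[symmetric] cheb_even_coeff_diff)
  have "s * (a (Suc t) - a t) = -1"
    unfolding a_diff s_def q_def[symmetric] using R q by (simp add: field_simps)
  then have sa: "s * a t = 1 + s * a (Suc t)" unfolding right_diff_distrib by linarith
  have coeff_cancel: "s * (a t * x) = x + s * (x * a (Suc t))" for x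
  proof -
    have "s * (a t * x) = (s * a t) * x" by simp
    also have "\<dots> = x + s * (x * a (Suc t))" unfolding sa by (simp add: algebra_simps)
    finally show ?thesis .
  qed
  have "B *\<^sub>v cheb_solver R B v k = s \<cdot>\<^sub>v (B *\<^sub>v g (Suc t) - B *\<^sub>v g t)"
    unfolding cheb_solver_def t_def[symmetric] s_def[symmetric] g_def[symmetric]
    using B cheb_even_part_carrier[OF B v]
    by (simp add: mult_mat_vec[OF B] mult_minus_distrib_mat_vec[OF B] g_def)
  then show ?thesis
    unfolding v_def[symmetric] s_def[symmetric] w
    using v Bg B by (intro eq_vecI) (simp_all add: coeff_cancel carrier_vecD algebra_simps del: index_mult_mat_vec)
qed

lemma cheb_solver_residual_bound:
  fixes B :: "real mat"
  assumes B: "B \<in> carrier_mat n n" and z: "z \<in> carrier_vec n"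
    and R: "0 < R" and norm: "spec_norm B \<le> R"
  shows "vnorm (B *\<^sub>v cheb_solver R B (B *\<^sub>v z) k - B *\<^sub>v z) \<le> R * vnorm z / (2 * real (k div 2) + 1)"
proof -
  define t w where "t = k div 2" and "w = cheb_seq (alt_op B R) z"
  have "vnorm (B *\<^sub>v x) \<le> R * vnorm x" if "x \<in> carrier_vec n" for x
    using vnorm_mult_mat_vec_le[OF B that] norm vnorm_nonneg[of x] by (meson mult_right_mono order_trans)
  with B R interpret adjoint_contraction_chain n "alt_op B R"
    by (rule adjoint_contraction_chain_alt_op)
  have "\<bar>(-1) ^ Suc t * R / (2 * (2 * real t + 1))\<bar> = R / (2 * (2 * real t + 1))"
    using R by (simp add: abs_mult power_abs)
  then have "vnorm (B *\<^sub>v cheb_solver R B (B *\<^sub>v z) k - B *\<^sub>v z)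
      = R / (2 * (2 * real t + 1)) * vnorm (w (2 * Suc t) - w (2 * t))"
    unfolding cheb_solver_residual[OF B z R[THEN less_imp_neq, THEN not_sym]] t_def w_def vnorm_smult
    by simp
  also have "\<dots> \<le> R / (2 * (2 * real t + 1)) * (2 * vnorm z)"
    using cheb_seq_step_bound[OF z, of "2 * t"] R unfolding w_def by (intro mult_left_mono) simp_all
  also have "\<dots> = R * vnorm z / (2 * real t + 1)" by (simp add: field_simps)
  finally show ?thesis unfolding t_def .
qed

theorem lemma4:
  fixes R D :: real and k :: nat
  assumes "R > 0" and "D > 0"
  shows "\<exists>A. in_A_lin A \<and>
    (\<forall>m \<ge> 1. \<forall>B zstar.
        B \<in> carrier_mat m m \<longrightarrow> spec_norm B \<le> R \<longrightarrow>
        zstar \<in> carrier_vec m \<longrightarrow> vnorm zstar \<le> D \<longrightarrow>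
        (vnorm (B *\<^sub>v A B (B *\<^sub>v zstar) k - B *\<^sub>v zstar))\<^sup>2
          \<le> R\<^sup>2 * D\<^sup>2 / (2 * real (k div 2) + 1)\<^sup>2)"
proof (intro exI[of _ "cheb_solver R"] conjI allI impI)
  show "in_A_lin (cheb_solver R)" by (rule in_A_lin_cheb_solver)
  fix m :: nat and B zstar
  assume B: "B \<in> carrier_mat m m" and norm: "spec_norm B \<le> R"
    and z: "zstar \<in> carrier_vec m" and zD: "vnorm zstar \<le> D"
  have "vnorm (B *\<^sub>v cheb_solver R B (B *\<^sub>v zstar) k - B *\<^sub>v zstar)
      \<le> R * vnorm zstar / (2 * real (k div 2) + 1)"
    using B z assms(1) norm by (rule cheb_solver_residual_bound)
  also have "\<dots> \<le> R * D / (2 * real (k div 2) + 1)"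
    using zD assms(1) by (intro divide_right_mono mult_left_mono) simp_all
  finally have "vnorm (B *\<^sub>v cheb_solver R B (B *\<^sub>v zstar) k - B *\<^sub>v zstar)
      \<le> R * D / (2 * real (k div 2) + 1)" .
  from power_mono[OF this vnorm_nonneg, of 2]
  show "(vnorm (B *\<^sub>v cheb_solver R B (B *\<^sub>v zstar) k - B *\<^sub>v zstar))\<^sup>2
      \<le> R\<^sup>2 * D\<^sup>2 / (2 * real (k div 2) + 1)\<^sup>2"
    by (simp add: power_divide power_mult_distrib)
qed

end
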